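(* Let $M,N$ be weights of $\mathbb{R}^m,\mathbb{R}^n$, let $A\in\mathbb{R}^{m\times n}$ with $MA=AN$, and let $K\subseteq\mathbb{R}^n$ be a closed cone with $A^{[\dagger]}\circ A\circ K\subseteq K$. Then $$(A^{[*]}\circ A)^{[\dagger]}\circ K^{[*]}\subseteq K+\mathcal{N}(A\circ I)\iff (A^{[*]}\circ A)^{[\dagger]}\circ K^{[*]}\subseteq K.$$
   Context: A weight is a real symmetric matrix $W$ with $W^2=I$. $\mathbb{R}^m$ and $\mathbb{R}^n$ carry weights $M\in\mathbb{R}^{m\times m}$ and $N\in\mathbb{R}^{n\times n}$, respectively. The indefinite inner product on the space with weight $W$ is $[x,y]=\langle x,Wy\rangle$. Indefinite matrix product: if $B$ has $p$ columns and $C$ has $p$ rows (or is a vector in $\mathbb{R}^p$), $p\in\{m,n\}$, and $W$ is the weight of $\mathbb{R}^p$, then $B\circ C:=BWC$. $I$ denotes an identity matrix of the appropriate size. Indefinite adjoint of $B\in\mathbb{R}^{p\times q}$: $B^{[*]}:=W_qB^TW_p$, where $W_p,W_q$ are the weights of $\mathbb{R}^p,\mathbb{R}^q$. Indefinite Moore–Penrose inverse: for $B\in\mathbb{R}^{p\times q}$, $B^{[\dagger]}$ is the unique $X\in\mathbb{R}^{q\times p}$ such that - $B\circ X\circ B=B$, - $X\circ B\circ X=X$, - $(B\circ X)^{[*]}=B\circ X$, - $(X\circ B)^{[*]}=X\circ B$. It equals $W_qB^\dagger W_p$. Range and null space: for a matrix $B$ with $q$ columns, $\mathcal{R}(B)=\{B\circ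 x:x\in\mathbb{R}^q\}$ and $\mathcal{N}(B)=\{x\in\mathbb{R}^q:B\circ x=0\}$. A cone is a nonempty set closed under addition and under multiplication by nonnegative scalars. For $S$ a subset of $\mathbb{R}^p$ with weight $W$, the dual is $S^{[*]}=\{x\in\mathbb{R}^p:[x,t]\ge0\ \forall t\in S\}$. For a matrix $B$ and a set $S$, $B\circ S=\{B\circ s:s\in S\}$. The sum of sets is the Minkowski sum. *)

theory Defs
  imports "HOL-Analysis.Analysis"
begin

definition is_weight :: "real^'n^'n \<Rightarrow> bool" where
  "is_weight W \<longleftrightarrow> transpose W = W \<and> W ** W = mat 1"

definition indef_mult :: "real^'p^'p \<Rightarrow> real^'p^'a \<Rightarrow> real^'b^'p \<Rightarrow> real^'b^'a" where
  "indef_mult W B C = B ** W ** C"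

definition indef_app :: "real^'p^'p \<Rightarrow> real^'p^'a \<Rightarrow> real^'p \<Rightarrow> real^'a" where
  "indef_app W B x = B *v (W *v x)"

definition indef_adj :: "real^'p^'p \<Rightarrow> real^'q^'q \<Rightarrow> real^'q^'p \<Rightarrow> real^'p^'q" where
  "indef_adj Wp Wq B = Wq ** transpose B ** Wp"

definition indef_mp :: "real^'p^'p \<Rightarrow> real^'q^'q \<Rightarrow> real^'q^'p \<Rightarrow> real^'p^'q" where
  "indef_mp Wp Wq B = (THE X.
     indef_mult Wp (indef_mult Wq B X) B = B \<and>
     indef_mult Wq (indef_mult Wp X B) X = X \<and>
     indef_adj Wp Wp (indef_mult Wq B X) = indef_mult Wq B X \<and>
     indef_adj Wq Wq (indef_mult Wp X B) = indef_mult Wp X B)"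

definition indef_null :: "real^'q^'q \<Rightarrow> real^'q^'p \<Rightarrow> (real^'q) set" where
  "indef_null Wq B = {x. indef_app Wq B x = 0}"

definition is_cone :: "('a::real_vector) set \<Rightarrow> bool" where
  "is_cone S \<longleftrightarrow> S \<noteq> {} \<and> (\<forall>x\<in>S. \<forall>y\<in>S. x + y \<in> S) \<and> (\<forall>x\<in>S. \<forall>c::real. c \<ge> 0 \<longrightarrow> c *\<^sub>R x \<in> S)"

definition indef_dual :: "real^'p^'p \<Rightarrow> (real^'p) set \<Rightarrow> (real^'p) set" where
  "indef_dual W S = {x. \<forall>t\<in>S. x \<bullet> (W *v t) \<ge> 0}"

definition indef_image :: "real^'p^'p \<Rightarrow> real^'p^'a \<Rightarrow> (real^'p) set \<Rightarrow> (real^'a) set" where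
  "indef_image W B S = indef_app W B ` S"

definition mink_sum :: "('a::plus) set \<Rightarrow> 'a set \<Rightarrow> 'a set" where
  "mink_sum S T = {s + t | s t. s \<in> S \<and> t \<in> T}"

end

theory Submission
  imports Defs
begin

text \<open>For weights M and N the indefinite inverses reduce to ordinary Moore-Penrose
  inverses: A^[+] = N A^+ M and (A^[*] o A)^[+] = N (N A^T A)^+ N. The operator
  P = A^[+] o A maps K into K by hypothesis, kills N(A o I) (this uses MA = AN), and fixes
  every vector N (C A)^+ x, since (C A)^+ maps into the row space of A, on which A^+ A is the
  identity. Applying P to a decomposition y = k + z with k in K and z in N(A o I) therefore
  gives y = P k in K. The Moore-Penrose inverse itself is assembled from left inverses of a
  matrix and of its transpose on their row spaces.\<close>

declare transpose_matrix_vector [simp del]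

lemma inner_transpose_mult: "(transpose B *v x) \<bullet> y = x \<bullet> (B *v (y::real^'n))"
  by (simp add: dot_lmul_matrix transpose_matrix_vector)

lemma transpose_eq_if_inner_symmetric:
  fixes S :: "real^'n^'n"
  assumes "\<And>x y. (S *v x) \<bullet> y = x \<bullet> (S *v y)"
  shows "transpose S = S"
  unfolding matrix_eq
proof
  fix x
  show "transpose S *v x = S *v x"
    by (rule vector_eq_rdot[THEN iffD1]) (metis assms inner_transpose_mult)
qed

lemma kernel_range_transpose_decomp:
  fixes B :: "real^'n^'m"
  obtains v z where "v \<in> range ((*v) (transpose B))" "B *v z = 0" "x = v + z"
proof -
  let ?V = "range ((*v) (transpose B))"
  have span_V: "span ?V = ?V"
    using linear_subspace_image[OF matrix_vector_mul_linear subspace_UNIV] by (simp add: span_eq_iff)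
  obtain v z where v: "v \<in> ?V" and z: "\<And>w. w \<in> ?V \<Longrightarrow> orthogonal z w" and x: "x = v + z"
    using orthogonal_subspace_decomp_exists[of ?V x] unfolding span_V by blast
  have "(B *v z) \<bullet> (B *v z) = z \<bullet> (transpose B *v (B *v z))"
    by (metis inner_commute inner_transpose_mult)
  also have "\<dots> = 0"
    using z[of "transpose B *v (B *v z)"] by (simp add: orthogonal_def)
  finally show thesis
    using that v x by simp
qed

lemma inj_on_range_transpose:
  fixes B :: "real^'n^'m"
  shows "inj_on ((*v) B) (range ((*v) (transpose B)))"
proof (rule inj_onI)
  fix u v assume "u \<in> range ((*v) (transpose B))" "v \<in> range ((*v) (transpose B))" "B *v u = B *v v"
  then obtain a b where "u = transpose B *v a" "v = transpose B *v b" and Buv: "B *v (u - v) = 0"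
    by (auto simp: matrix_vector_mult_diff_distrib)
  then have c: "u - v = transpose B *v (a - b)"
    by (simp add: matrix_vector_mult_diff_distrib)
  have "(u - v) \<bullet> (u - v) = (a - b) \<bullet> (B *v (u - v))"
    by (simp add: c inner_transpose_mult)
  then show "u = v"
    using Buv by simp
qed

text \<open>G inverts B on its row space range (transpose B), so G B is the orthogonal
  projection onto the row space.\<close>

lemma min_norm_ginverse_exists:
  fixes B :: "real^'n^'m"
  obtains G where "B ** G ** B = B" "transpose (G ** B) = G ** B"
proof -
  let ?V = "range ((*v) (transpose B))"
  have "subspace ?V"
    using linear_subspace_image[OF matrix_vector_mul_linear subspace_UNIV] by blast
  then obtain g where g: "linear g" and g_inv: "\<forall>v\<in>?V. g (B *v v) = v"
    using linear_exists_left_inverse_on[OF _ _ inj_on_range_transpose] by (metis matrix_vector_mul_linear)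
  define G where "G = matrix g"
  have GB: "(G ** B) *v x = v" if "v \<in> ?V" "B *v z = 0" "x = v + z" for x v z
    using that g g_inv linear_0[OF g]
    by (auto simp: G_def matrix_works matrix_vector_right_distrib simp flip: matrix_vector_mul_assoc)
  show thesis
  proof
    show "B ** G ** B = B"
      unfolding matrix_eq
    proof
      fix x
      obtain v z where "v \<in> ?V" "B *v z = 0" "x = v + z"
        by (rule kernel_range_transpose_decomp)
      then show "(B ** G ** B) *v x = B *v x"
        using GB by (simp flip: matrix_mul_assoc matrix_vector_mul_assoc add: matrix_vector_right_distrib)
    qed
    show "transpose (G ** B) = G ** B"
    proof (rule transpose_eq_if_inner_symmetric)
      fix x y
      obtain v z where v: "v \<in> ?V" "B *v z = 0" "x = v + z"
        by (rule kernel_range_transpose_decomp)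
      obtain v' z' where v': "v' \<in> ?V" "B *v z' = 0" "y = v' + z'"
        by (rule kernel_range_transpose_decomp)
      have orth: "u \<bullet> w = 0" if "u \<in> ?V" "B *v w = 0" for u w
        using that by (auto simp: inner_transpose_mult)
      show "((G ** B) *v x) \<bullet> y = x \<bullet> ((G ** B) *v y)"
        using GB[OF v] GB[OF v'] orth[OF v(1) v'(2)] orth[OF v'(1) v(2)]
        by (simp add: v(3) v'(3) inner_add_left inner_add_right inner_commute)
    qed
  qed
qed

definition moore_penrose :: "real^'n^'m \<Rightarrow> real^'m^'n \<Rightarrow> bool" where
  "moore_penrose B Z \<longleftrightarrow> B ** Z ** B = B \<and> Z ** B ** Z = Z \<and>
     transpose (B ** Z) = B ** Z \<and> transpose (Z ** B) = Z ** B"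

lemma moore_penrose_exists:
  fixes B :: "real^'n^'m"
  shows "\<exists>Z. moore_penrose B Z"
proof -
  obtain G where G: "B ** G ** B = B" "transpose (G ** B) = G ** B"
    by (rule min_norm_ginverse_exists)
  obtain H where H: "transpose B ** H ** transpose B = transpose B" "transpose (H ** transpose B) = H ** transpose B"
    by (rule min_norm_ginverse_exists)
  have H': "B ** transpose H ** B = B" "transpose (B ** transpose H) = B ** transpose H"
    using arg_cong[OF H(1), of transpose] H(2) by (simp_all add: matrix_transpose_mul matrix_mul_assoc)
  \<comment> \<open>transpose H is a least-squares generalized inverse of B\<close>
  define Z where "Z = G ** B ** transpose H"
  have BZ: "B ** Z = B ** transpose H"
    using G(1) by (simp add: Z_def matrix_mul_assoc)
  have ZB: "Z ** B = G ** B"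
    using H'(1) by (simp add: Z_def flip: matrix_mul_assoc)
  have "B ** Z ** B = B"
    using BZ H'(1) by simp
  moreover have "Z ** B ** Z = Z"
    using BZ ZB by (simp add: Z_def flip: matrix_mul_assoc)
  ultimately have "moore_penrose B Z"
    unfolding moore_penrose_def using BZ ZB G(2) H'(2) by simp
  then show ?thesis ..
qed

lemma transpose_mult3: "transpose (A ** B ** C) = transpose C ** transpose B ** transpose (A::real^_^_)"
  by (simp add: matrix_transpose_mul matrix_mul_assoc)

lemma moore_penrose_transpose:
  assumes "moore_penrose B Z"
  shows "moore_penrose (transpose B) (transpose Z)"
proof -
  have "B ** Z ** B = B" "Z ** B ** Z = Z" "transpose (B ** Z) = B ** Z" "transpose (Z ** B) = Z ** B"
    using assms by (simp_all add: moore_penrose_def)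
  then show ?thesis
    unfolding moore_penrose_def
    by (metis transpose_mult3 matrix_transpose_mul transpose_transpose)
qed

lemma moore_penrose_left_eq:
  assumes Z1: "moore_penrose B Z1" and Z2: "moore_penrose B Z2"
  shows "Z1 = Z1 ** B ** Z2"
proof -
  have "transpose B = transpose (B ** Z2 ** B)"
    using Z2 by (simp add: moore_penrose_def)
  also have "\<dots> = transpose B ** transpose (B ** Z2)"
    by (simp add: matrix_transpose_mul)
  also have "\<dots> = transpose B ** B ** Z2"
    using Z2 by (simp add: moore_penrose_def matrix_mul_assoc)
  finally have Bt: "transpose B = transpose B ** B ** Z2" .
  have "Z1 = Z1 ** transpose (B ** Z1)"
    using Z1 by (simp add: moore_penrose_def matrix_mul_assoc)
  also have "\<dots> = Z1 ** transpose Z1 ** (transpose B ** B ** Z2)"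
    by (simp add: matrix_transpose_mul matrix_mul_assoc flip: Bt)
  also have "\<dots> = Z1 ** transpose (B ** Z1) ** B ** Z2"
    by (simp add: matrix_transpose_mul matrix_mul_assoc)
  also have "\<dots> = Z1 ** B ** Z2"
    using Z1 by (simp add: moore_penrose_def matrix_mul_assoc)
  finally show ?thesis .
qed

lemma moore_penrose_unique:
  assumes "moore_penrose B Z1" and "moore_penrose B Z2"
  shows "Z1 = Z2"
proof -
  have "transpose Z2 = transpose Z2 ** transpose B ** transpose Z1"
    using assms by (intro moore_penrose_left_eq moore_penrose_transpose)
  then have "transpose Z2 = transpose (Z1 ** B ** Z2)"
    by (simp add: matrix_transpose_mul matrix_mul_assoc)
  then have "Z2 = Z1 ** B ** Z2"
    by (metis transpose_transpose)
  then show ?thesis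
    using moore_penrose_left_eq[OF assms] by simp
qed

definition pinv :: "real^'n^'m \<Rightarrow> real^'m^'n" where
  "pinv B = (THE Z. moore_penrose B Z)"

lemma moore_penrose_pinv: "moore_penrose B (pinv B)"
  unfolding pinv_def
  using moore_penrose_exists moore_penrose_unique by (metis theI)

lemma pinv_penrose_equations:
  "B ** pinv B ** B = B" "pinv B ** B ** pinv B = pinv B"
  "transpose (B ** pinv B) = B ** pinv B" "transpose (pinv B ** B) = pinv B ** B"
  using moore_penrose_pinv[of B] by (simp_all add: moore_penrose_def)

lemma pinv_eqI: "moore_penrose B Z \<Longrightarrow> pinv B = Z"
  using moore_penrose_pinv moore_penrose_unique by blast

lemma weight_mult_self: "is_weight W \<Longrightarrow> W ** W = mat 1"
  by (simp add: is_weight_def)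

lemma weight_transpose: "is_weight W \<Longrightarrow> transpose W = W"
  by (simp add: is_weight_def)

lemma mult_weight_weight: "is_weight W \<Longrightarrow> C ** W ** W = C"
  by (simp add: weight_mult_self flip: matrix_mul_assoc)

lemma weight_mult_cancel:
  assumes "is_weight W"
  shows "W ** C = W ** D \<longleftrightarrow> C = D"
  by (metis assms matrix_mul_assoc matrix_mul_lid weight_mult_self)

lemma mult_weight_cancel:
  assumes "is_weight W"
  shows "C ** W = D ** W \<longleftrightarrow> C = D"
  by (metis assms mult_weight_weight)

definition indef_penrose :: "real^'p^'p \<Rightarrow> real^'q^'q \<Rightarrow> real^'q^'p \<Rightarrow> real^'p^'q \<Rightarrow> bool" where
  "indef_penrose Wp Wq B X \<longleftrightarrow>
     indef_mult Wp (indef_mult Wq B X) B = B \<and>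
     indef_mult Wq (indef_mult Wp X B) X = X \<and>
     indef_adj Wp Wp (indef_mult Wq B X) = indef_mult Wq B X \<and>
     indef_adj Wq Wq (indef_mult Wp X B) = indef_mult Wp X B"

lemma indef_penrose_iff_moore_penrose:
  assumes "is_weight Wp" and "is_weight Wq"
  shows "indef_penrose Wp Wq B (Wq ** Z ** Wp) \<longleftrightarrow> moore_penrose B Z"
  unfolding indef_penrose_def moore_penrose_def indef_mult_def indef_adj_def
  using assms
  by (simp add: matrix_transpose_mul matrix_mul_assoc weight_mult_self mult_weight_weight weight_transpose
      mult_weight_cancel, simp add: weight_mult_cancel flip: matrix_mul_assoc)

lemma indef_mp_eq_pinv:
  assumes Wp: "is_weight Wp" and Wq: "is_weight Wq"
  shows "indef_mp Wp Wq B = Wq ** pinv B ** Wp"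
  unfolding indef_mp_def indef_penrose_def[symmetric]
proof (rule the_equality)
  show "indef_penrose Wp Wq B (Wq ** pinv B ** Wp)"
    using indef_penrose_iff_moore_penrose[OF Wp Wq] moore_penrose_pinv by blast
next
  fix X
  assume "indef_penrose Wp Wq B X"
  moreover have "X = Wq ** (Wq ** X ** Wp) ** Wp"
    using Wp Wq by (simp add: matrix_mul_assoc weight_mult_self mult_weight_weight)
  ultimately have "pinv B = Wq ** X ** Wp"
    using indef_penrose_iff_moore_penrose[OF Wp Wq] pinv_eqI by metis
  then show "X = Wq ** pinv B ** Wp"
    using \<open>X = Wq ** (Wq ** X ** Wp) ** Wp\<close> by simp
qed

lemma pinv_mult_mult_transpose: "pinv A ** A ** transpose A = transpose A"
proof -
  have "transpose A = transpose (A ** pinv A ** A)"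
    by (simp add: pinv_penrose_equations)
  also have "\<dots> = transpose (pinv A ** A) ** transpose A"
    by (simp add: matrix_transpose_mul matrix_mul_assoc)
  also have "\<dots> = pinv A ** A ** transpose A"
    by (simp add: pinv_penrose_equations)
  finally show ?thesis ..
qed

lemma pinv_mult_mult_pinv_mult: "pinv A ** A ** pinv (C ** A) = pinv (C ** A)"
proof -
  let ?Z = "pinv (C ** A)"
  have "?Z = transpose (?Z ** (C ** A)) ** ?Z"
    by (simp add: pinv_penrose_equations)
  also have "\<dots> = transpose A ** (transpose C ** transpose ?Z ** ?Z)"
    by (simp add: matrix_transpose_mul matrix_mul_assoc)
  finally have Z: "?Z = transpose A ** (transpose C ** transpose ?Z ** ?Z)" .
  have "pinv A ** A ** ?Z = pinv A ** A ** transpose A ** (transpose C ** transpose ?Z ** ?Z)"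
    by (subst Z) (simp add: matrix_mul_assoc)
  also have "\<dots> = ?Z"
    using Z by (simp add: pinv_mult_mult_transpose)
  finally show ?thesis .
qed

lemma subset_mink_sum_iff:
  assumes "linear f" and "f ` K \<subseteq> K"
    and "\<And>y. y \<in> Y \<Longrightarrow> f y = y" and "\<And>z. z \<in> Z \<Longrightarrow> f z = 0" and "0 \<in> Z"
  shows "Y \<subseteq> mink_sum K Z \<longleftrightarrow> Y \<subseteq> K"
proof
  assume Y: "Y \<subseteq> mink_sum K Z"
  show "Y \<subseteq> K"
  proof
    fix y
    assume "y \<in> Y"
    then obtain k z where "k \<in> K" "z \<in> Z" "y = k + z"
      using Y by (auto simp: mink_sum_def)
    then have "y = f k"
      using assms \<open>y \<in> Y\<close> by (metis add.right_neutral linear_add)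
    then show "y \<in> K"
      using assms(2) \<open>k \<in> K\<close> by blast
  qed
next
  show "Y \<subseteq> K \<Longrightarrow> Y \<subseteq> mink_sum K Z"
    using assms(5) by (force simp: mink_sum_def)
qed

theorem lemma3p14:
  fixes M :: "real^'m^'m" and N :: "real^'n^'n" and A :: "real^'n^'m"
    and K :: "(real^'n) set"
  assumes "is_weight M" and "is_weight N"
    and "M ** A = A ** N"
    and "is_cone K" and "closed K"
    and "indef_image N (indef_mult M (indef_mp M N A) A) K \<subseteq> K"
  shows "indef_image N (indef_mp N N (indef_mult M (indef_adj M N A) A)) (indef_dual N K)
           \<subseteq> mink_sum K (indef_null N (indef_mult N A (mat 1)))
         \<longleftrightarrow>
         indef_image N (indef_mp N N (indef_mult M (indef_adj M N A) A)) (indef_dual N K) \<subseteq> K"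
proof -
  note weight = assms(1,2)
  define P where "P = N ** pinv A ** A ** N"
  define Y where "Y = indef_image N (indef_mp N N (indef_mult M (indef_adj M N A) A)) (indef_dual N K)"
  have "indef_mult M (indef_adj M N A) A = (N ** transpose A) ** A"
    using weight by (simp add: indef_mult_def indef_adj_def matrix_mul_assoc mult_weight_weight)
  then have Y: "Y = (*v) (N ** pinv ((N ** transpose A) ** A)) ` indef_dual N K"
    using weight by (simp add: Y_def indef_image_def indef_app_def indef_mp_eq_pinv
        matrix_vector_mul_assoc mult_weight_weight)
  have "P ** (N ** pinv ((N ** transpose A) ** A)) = N ** (pinv A ** A ** pinv ((N ** transpose A) ** A))"
    using weight by (simp add: P_def matrix_mul_assoc mult_weight_weight)
  then have fixes_Y: "P *v y = y" if "y \<in> Y" for y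
    using that by (auto simp: Y pinv_mult_mult_pinv_mult matrix_vector_mul_assoc)
  have kills_null: "P *v z = 0" if "z \<in> indef_null N (indef_mult N A (mat 1))" for z
  proof -
    have "A *v z = 0"
      using that weight by (simp add: indef_null_def indef_app_def indef_mult_def
          matrix_vector_mul_assoc mult_weight_weight)
    moreover have "P = N ** pinv A ** M ** A"
      using assms(3) by (simp add: P_def flip: matrix_mul_assoc)
    ultimately show ?thesis
      by (simp flip: matrix_vector_mul_assoc)
  qed
  have "(*v) P ` K \<subseteq> K"
    using assms(6) weight by (simp add: P_def indef_image_def indef_app_def indef_mult_def
        indef_mp_eq_pinv matrix_vector_mul_assoc mult_weight_weight)
  moreover have "0 \<in> indef_null N (indef_mult N A (mat 1))"
    by (simp add: indef_null_def indef_app_def)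
  ultimately show ?thesis
    using subset_mink_sum_iff[OF matrix_vector_mul_linear _ fixes_Y kills_null] unfolding Y_def by blast
qed

end
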